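(* Assume the setting and algorithm described in the context. If $0<\alpha\le\frac{\sqrt n}{\sqrt{8m}\,L}$, then for all $k\ge0$, almost surely, $$\mathbb E\big[t^{k+1}\,|\,\mathcal F^k\big]\le\Big(1-\frac1{4m}\Big)t^k+4m\alpha^2\|\overline{\nabla\mathbf f}(x^k)\|^2+\frac{9}{4mn}\|x^k-Jx^k\|^2 .$$
   Context: Setting. Let $n,m,p\ge1$ be integers and $\mathcal V=\{1,\dots,n\}$. For each $i\in\mathcal V$ and $j\in\{1,\dots,m\}$, $f_{i,j}:\mathbb R^p\to\mathbb R$ is differentiable and $L$-smooth for some $L>0$, i.e. $\|\nabla f_{i,j}(x)-\nabla f_{i,j}(y)\|\le L\|x-y\|$ for all $x,y\in\mathbb R^p$. Let $f_i:=\frac1m\sum_{j=1}^m f_{i,j}$ and $F:=\frac1n\sum_{i=1}^n f_i$, and assume $F^*:=\inf_{x\in\mathbb R^p}F(x)>-\infty$. Let $\underline W=(\underline w_{ir})\in\mathbb R^{n\times n}$ be a nonnegative, primitive, doubly stochastic matrix ($\underline W\mathbf 1_n=\mathbf 1_n$, $\mathbf 1_n^\top\underline W=\mathbf 1_n^\top$), and let $\lambda\in[0,1)$ be its second largest singular value. Any expression with $\lambda$ in a denominator is read as $+\infty$ when $\lambda=0$. Algorithm GT-SAGA with step-size $\alpha>0$: fix a deterministic $\bar x^0\in\mathbb R^p$; for all $i\in\mathcal V$ set $x_i^0=\bar x^0$, $z_{i,j}^0=x_i^0$ for all $j$, $y_i^0=0$, $g_i^{-1}=0$. For $k=0,1,2,\dots$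 and every $i\in\mathcal V$: draw $\tau_i^k$ uniformly from $\{1,\dots,m\}$; set $g_i^k=\nabla f_{i,\tau_i^k}(x_i^k)-\nabla f_{i,\tau_i^k}(z_{i,\tau_i^k}^k)+\frac1m\sum_{j=1}^m\nabla f_{i,j}(z_{i,j}^k)$; set $y_i^{k+1}=\sum_{r=1}^n\underline w_{ir}(y_r^k+g_r^k-g_r^{k-1})$; set $x_i^{k+1}=\sum_{r=1}^n\underline w_{ir}(x_r^k-\alpha y_r^{k+1})$; draw $s_i^k$ uniformly from $\{1,\dots,m\}$; set $z_{i,j}^{k+1}=x_i^k$ if $j=s_i^k$ and $z_{i,j}^{k+1}=z_{i,j}^k$ otherwise. The family $\{\tau_i^k,s_i^k: i\in\mathcal V,k\ge0\}$ is independent. Notation. $x^k,y^k,g^k\in\mathbb R^{np}$ stack the $x_i^k$, $y_i^k$, $g_i^k$; $\nabla\mathbf f(x^k)\in\mathbb R^{np}$ stacks $\nabla f_i(x_i^k)$, $i=1,\dots,n$; $W=\underline W\otimes I_p$, $J=(\frac1n\mathbf 1_n\mathbf 1_n^\top)\otimes I_p$; $\bar x^k=\frac1n\sum_i x_i^k$, $\bar g^k=\frac1n\sum_i g_i^k$, $\overline{\nabla\mathbf f}(x^k)=\frac1n\sum_i\nabla f_i(x_i^k)$. $\mathcal F^0$ is the trivial $\sigma$-algebra and $\mathcal F^k=\sigma(\{\tau_i^t,s_i^t:i\in\mathcal V,\ t\le k-1\})$ for $k\ge1$. $t^k:=\frac1n\sum_{i=1}^n\frac1m\sum_{j=1}^m\|\bar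 x^k-z_{i,j}^k\|^2$. $\|\nabla\mathbf f(x^0)\|^2:=\sum_{i=1}^n\|\nabla f_i(\bar x^0)\|^2$. Norms are Euclidean (spectral for matrices); vector and matrix inequalities are entrywise. *)

theory Defs
  imports "HOL-Analysis.Analysis" "HOL-Probability.Probability"
begin

text \<open>Nodes are the elements of a finite type 'n (so n = CARD('n)); R^p is an
  abstract Euclidean space 'v. The mixing matrix is W :: real^'n^'n.\<close>

primrec mat_pow :: "real^'n^'n \<Rightarrow> nat \<Rightarrow> real^'n^'n" where
  "mat_pow A 0 = mat 1"
| "mat_pow A (Suc k) = A ** mat_pow A k"

definition nonneg_primitive_doubly_stochastic :: "real^'n^'n \<Rightarrow> bool" where
  "nonneg_primitive_doubly_stochastic W \<longleftrightarrow>
     (\<forall>i r. W $ i $ r \<ge> 0) \<and>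
     (\<forall>i. (\<Sum>r\<in>UNIV. W $ i $ r) = 1) \<and>
     (\<forall>r. (\<Sum>i\<in>UNIV. W $ i $ r) = 1) \<and>
     (\<exists>k. \<forall>i r. mat_pow W k $ i $ r > 0)"

text \<open>GT-SAGA state at iteration k: (x^k, y^k, z^k, g^{k-1}).
  grad i j is the gradient of f_{i,j}; tau k i, s k i are the sampled indices.\<close>

type_synonym ('n,'v) gt_state = "('n \<Rightarrow> 'v) \<times> ('n \<Rightarrow> 'v) \<times> ('n \<Rightarrow> nat \<Rightarrow> 'v) \<times> ('n \<Rightarrow> 'v)"

definition gt_g :: "('n \<Rightarrow> nat \<Rightarrow> 'v \<Rightarrow> 'v::euclidean_space) \<Rightarrow> nat \<Rightarrow>
    ('n \<Rightarrow> 'v) \<Rightarrow> ('n \<Rightarrow> nat \<Rightarrow> 'v) \<Rightarrow> ('n \<Rightarrow> nat) \<Rightarrow> 'n \<Rightarrow> 'v" where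
  "gt_g grad m x z tau i =
     grad i (tau i) (x i) - grad i (tau i) (z i (tau i))
     + (1 / real m) *\<^sub>R (\<Sum>j=1..m. grad i j (z i j))"

primrec gt_saga :: "real^'n^'n \<Rightarrow> ('n \<Rightarrow> nat \<Rightarrow> 'v \<Rightarrow> 'v::euclidean_space) \<Rightarrow> nat \<Rightarrow> real \<Rightarrow> 'v \<Rightarrow>
    (nat \<Rightarrow> 'n \<Rightarrow> nat) \<Rightarrow> (nat \<Rightarrow> 'n \<Rightarrow> nat) \<Rightarrow> nat \<Rightarrow> ('n::finite,'v) gt_state" where
  "gt_saga W grad m \<alpha> x0 tau s 0 = ((\<lambda>i. x0), (\<lambda>i. 0), (\<lambda>i j. x0), (\<lambda>i. 0))"
| "gt_saga W grad m \<alpha> x0 tau s (Suc k) =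
     (case gt_saga W grad m \<alpha> x0 tau s k of (x, y, z, gprev) \<Rightarrow>
       let g = gt_g grad m x z (tau k);
           y' = (\<lambda>i. \<Sum>r\<in>UNIV. W $ i $ r *\<^sub>R (y r + g r - gprev r));
           x' = (\<lambda>i. \<Sum>r\<in>UNIV. W $ i $ r *\<^sub>R (x r - \<alpha> *\<^sub>R y' r));
           z' = (\<lambda>i j. if j = s k i then x i else z i j)
       in (x', y', z', g))"

definition gt_x :: "real^'n^'n \<Rightarrow> ('n \<Rightarrow> nat \<Rightarrow> 'v \<Rightarrow> 'v::euclidean_space) \<Rightarrow> nat \<Rightarrow> real \<Rightarrow> 'v \<Rightarrow>
    (nat \<Rightarrow> 'n \<Rightarrow> nat) \<Rightarrow> (nat \<Rightarrow> 'n \<Rightarrow> nat) \<Rightarrow> nat \<Rightarrow> 'n::finite \<Rightarrow> 'v" where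
  "gt_x W grad m \<alpha> x0 tau s k = fst (gt_saga W grad m \<alpha> x0 tau s k)"

definition gt_z :: "real^'n^'n \<Rightarrow> ('n \<Rightarrow> nat \<Rightarrow> 'v \<Rightarrow> 'v::euclidean_space) \<Rightarrow> nat \<Rightarrow> real \<Rightarrow> 'v \<Rightarrow>
    (nat \<Rightarrow> 'n \<Rightarrow> nat) \<Rightarrow> (nat \<Rightarrow> 'n \<Rightarrow> nat) \<Rightarrow> nat \<Rightarrow> 'n::finite \<Rightarrow> nat \<Rightarrow> 'v" where
  "gt_z W grad m \<alpha> x0 tau s k = fst (snd (snd (gt_saga W grad m \<alpha> x0 tau s k)))"

definition avg :: "('n::finite \<Rightarrow> 'v::real_vector) \<Rightarrow> 'v" where
  "avg x = (1 / real CARD('n)) *\<^sub>R (\<Sum>i\<in>UNIV. x i)"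

definition tk :: "nat \<Rightarrow> ('n::finite \<Rightarrow> 'v::real_normed_vector) \<Rightarrow> ('n \<Rightarrow> nat \<Rightarrow> 'v) \<Rightarrow> real" where
  "tk m x z = (1 / real CARD('n)) * (\<Sum>i\<in>UNIV. (1 / real m) * (\<Sum>j=1..m. (norm (avg x - z i j))\<^sup>2))"

definition consensus_err :: "('n::finite \<Rightarrow> 'v::real_normed_vector) \<Rightarrow> real" where
  "consensus_err x = (\<Sum>i\<in>UNIV. (norm (x i - avg x))\<^sup>2)"

definition avg_grad :: "('n::finite \<Rightarrow> nat \<Rightarrow> 'v \<Rightarrow> 'v::real_normed_vector) \<Rightarrow> nat \<Rightarrow> ('n \<Rightarrow> 'v) \<Rightarrow> 'v" where
  "avg_grad grad m x = avg (\<lambda>i. (1 / real m) *\<^sub>R (\<Sum>j=1..m. grad i j (x i)))"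

definition filt :: "'a measure \<Rightarrow> (nat \<Rightarrow> 'n \<Rightarrow> 'a \<Rightarrow> nat) \<Rightarrow> (nat \<Rightarrow> 'n \<Rightarrow> 'a \<Rightarrow> nat) \<Rightarrow> nat \<Rightarrow> 'a measure" where
  "filt M tau s k = sigma (space M)
     ({tau t i -` A \<inter> space M | t i A. t < k} \<union> {s t i -` A \<inter> space M | t i A. t < k})"

end

theory Submission
  imports Defs
begin

text \<open>
  Given the draws before round \<open>k\<close>, the state \<open>(x\<^sup>k, z\<^sup>k)\<close> is fixed, and \<open>t\<^sup>k\<^sup>+\<^sup>1\<close>
  depends only on the fresh draws \<open>\<tau>\<^sup>k\<close> and \<open>s\<^sup>k\<close>, which are uniform and independent of
  the past; so the conditional expectation is the plain average of \<open>t\<^sup>k\<^sup>+\<^sup>1\<close> over all values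
  of these draws. Gradient tracking keeps the node average of \<open>y\<close> equal to that of the previous
  estimators, so the average of \<open>x\<^sup>k\<^sup>+\<^sup>1\<close> is that of \<open>x\<^sup>k\<close> minus \<open>\<alpha>\<close> times the average
  estimator. Over \<open>\<tau>\<^sup>k\<close> this estimator is the average gradient plus centred SAGA noise, whose
  second moment is bounded through \<open>L\<close>-smoothness by \<open>\<parallel>x\<^sup>k - J x\<^sup>k\<parallel>\<^sup>2\<close> and \<open>t\<^sup>k\<close>; over
  \<open>s\<^sup>k\<close> each table entry is replaced by \<open>x\<^sub>i\<^sup>k\<close> with probability \<open>1/m\<close>. Young's inequality
  with \<open>\<eta> = 1/(2m)\<close> and the step-size bound \<open>\<alpha>\<^sup>2 L\<^sup>2 \<le> n/(8m)\<close> give the coefficients.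
\<close>

section \<open>Sums over independent uniform indices\<close>

lemma sum_PiE_split_component:
  assumes "finite I" "i \<in> I" "\<And>j. j \<in> I \<Longrightarrow> finite (A j)"
  shows "(\<Sum>\<sigma>\<in>PiE I A. F \<sigma>) = (\<Sum>a\<in>A i. \<Sum>\<sigma>\<in>PiE I (A(i := {a})). F \<sigma>)"
proof -
  have fibre: "{\<sigma> \<in> PiE I A. \<sigma> i = a} = PiE I (A(i := {a}))" if "a \<in> A i" for a
    using that \<open>i \<in> I\<close> unfolding set_eq_iff PiE_iff extensional_def by (auto split: if_splits)
  have "(\<Sum>\<sigma>\<in>PiE I A. F \<sigma>) = (\<Sum>a\<in>A i. \<Sum>\<sigma>\<in>{\<sigma> \<in> PiE I A. \<sigma> i = a}. F \<sigma>)"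
    by (rule sum.group[symmetric]) (use assms in \<open>auto simp: PiE_iff intro: finite_PiE\<close>)
  also have "\<dots> = (\<Sum>a\<in>A i. \<Sum>\<sigma>\<in>PiE I (A(i := {a})). F \<sigma>)"
    by (intro sum.cong refl) (simp add: fibre)
  finally show ?thesis .
qed

lemma sum_PiE_component:
  fixes f :: "'c \<Rightarrow> 'b::real_vector"
  assumes "finite I" "i \<in> I" "\<And>j. j \<in> I \<Longrightarrow> finite (A j)"
  shows "(\<Sum>\<sigma>\<in>PiE I A. f (\<sigma> i)) = real (\<Prod>j\<in>I-{i}. card (A j)) *\<^sub>R (\<Sum>a\<in>A i. f a)"
proof -
  have card: "card (PiE I (A(i := {a}))) = (\<Prod>j\<in>I-{i}. card (A j))" for a
  proof -
    have "card (PiE I (A(i := {a}))) = (\<Prod>j\<in>I. card ((A(i := {a})) j))"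
      using assms(1) by (rule card_PiE)
    also have "\<dots> = (\<Prod>j\<in>I-{i}. card ((A(i := {a})) j))"
      using assms by (simp add: prod.remove)
    finally show ?thesis by (auto intro: prod.cong)
  qed
  have "(\<Sum>\<sigma>\<in>PiE I A. f (\<sigma> i)) = (\<Sum>a\<in>A i. \<Sum>\<sigma>\<in>PiE I (A(i := {a})). f a)"
    using assms by (subst sum_PiE_split_component[of I i])
      (auto intro!: sum.cong simp: PiE_iff dest!: bspec[of _ _ i])
  also have "\<dots> = real (\<Prod>j\<in>I-{i}. card (A j)) *\<^sub>R (\<Sum>a\<in>A i. f a)"
    by (simp only: sum_constant_scaleR card scaleR_sum_right)
  finally show ?thesis .
qed

lemma sum_PiE_two_components_eq_0:
  fixes F :: "'c \<Rightarrow> 'c \<Rightarrow> 'b::real_vector"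
  assumes "finite I" "i \<in> I" "l \<in> I" "i \<noteq> l" "\<And>j. j \<in> I \<Longrightarrow> finite (A j)"
    and "\<And>a. a \<in> A i \<Longrightarrow> (\<Sum>b\<in>A l. F a b) = 0"
  shows "(\<Sum>\<sigma>\<in>PiE I A. F (\<sigma> i) (\<sigma> l)) = 0"
proof -
  have "(\<Sum>\<sigma>\<in>PiE I A. F (\<sigma> i) (\<sigma> l)) = (\<Sum>a\<in>A i. \<Sum>\<sigma>\<in>PiE I (A(i := {a})). F a (\<sigma> l))"
    using assms by (subst sum_PiE_split_component[of I i])
      (auto intro!: sum.cong simp: PiE_iff dest!: bspec[of _ _ i])
  also have "\<dots> = 0"
  proof -
    have "(\<Sum>\<sigma>\<in>PiE I (A(i := {a})). F a (\<sigma> l)) = 0" if "a \<in> A i" for a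
      using assms that by (subst sum_PiE_component) auto
    then show ?thesis by simp
  qed
  finally show ?thesis .
qed

abbreviation node_draws :: "nat \<Rightarrow> ('n::finite \<Rightarrow> nat) set" where
  "node_draws m \<equiv> PiE UNIV (\<lambda>_. {1..m})"

lemma sum_node_draws_component:
  fixes f :: "nat \<Rightarrow> 'b::real_vector" and i :: "'n::finite"
  assumes "m \<ge> 1"
  shows "(\<Sum>\<sigma>\<in>node_draws m. f (\<sigma> i))
       = (real (card (node_draws m :: ('n \<Rightarrow> nat) set)) / real m) *\<^sub>R (\<Sum>a=1..m. f a)"
proof -
  obtain c where c: "CARD('n) = Suc c"
    using gr0_implies_Suc[OF finite_UNIV_card_ge_0[where 'a='n]] by auto
  have "(\<Prod>j\<in>(UNIV::'n set)-{i}. card {1..m}) = m ^ c"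
    by (simp add: card_Diff_singleton c)
  then show ?thesis
    using assms by (simp add: sum_PiE_component card_PiE c)
qed

lemma sum_node_draws_inner:
  fixes d :: "'n::finite \<Rightarrow> nat \<Rightarrow> 'v::real_inner"
  assumes m: "m \<ge> 1" and centered: "\<And>i. (\<Sum>a=1..m. d i a) = 0"
  shows "(\<Sum>\<tau>\<in>node_draws m. d i (\<tau> i) \<bullet> d l (\<tau> l))
       = (if i = l then real (card (node_draws m :: ('n \<Rightarrow> nat) set)) / real m
             * (\<Sum>a=1..m. (norm (d i a))\<^sup>2) else 0)"
proof (cases "i = l")
  case True
  then show ?thesis
    using sum_node_draws_component[OF m, of "\<lambda>a. d i a \<bullet> d i a" i]
    by (simp add: power2_norm_eq_inner)
next
  case False
  have "(\<Sum>\<tau>\<in>node_draws m. d i (\<tau> i) \<bullet> d l (\<tau> l)) = 0"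
    by (rule sum_PiE_two_components_eq_0[where F = "\<lambda>a b. d i a \<bullet> d l b"])
      (use False centered in \<open>auto simp: inner_sum_right[symmetric]\<close>)
  with False show ?thesis
    by simp
qed

lemma sum_node_draws_norm_sq_centered:
  fixes d :: "'n::finite \<Rightarrow> nat \<Rightarrow> 'v::real_inner"
  assumes m: "m \<ge> 1" and centered: "\<And>i. (\<Sum>a=1..m. d i a) = 0"
  shows "(\<Sum>\<tau>\<in>node_draws m. (norm (p - \<alpha> *\<^sub>R avg (\<lambda>i. d i (\<tau> i))))\<^sup>2)
       = real (card (node_draws m :: ('n \<Rightarrow> nat) set))
         * ((norm p)\<^sup>2 + \<alpha>\<^sup>2 / (real CARD('n))\<^sup>2 / real m * (\<Sum>i\<in>UNIV. \<Sum>a=1..m. (norm (d i a))\<^sup>2))"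
proof -
  define T where "T = (node_draws m :: ('n \<Rightarrow> nat) set)"
  define N where "N = real CARD('n)"
  define D where "D \<tau> = avg (\<lambda>i. d i (\<tau> i))" for \<tau>
  have "(\<Sum>\<tau>\<in>T. p \<bullet> d i (\<tau> i)) = 0" for i
    using sum_node_draws_component[OF m, of "\<lambda>a. p \<bullet> d i a" i] centered[of i]
    by (simp add: T_def inner_sum_right[symmetric])
  moreover have "(\<Sum>\<tau>\<in>T. p \<bullet> D \<tau>) = (1 / N) * (\<Sum>i\<in>UNIV. \<Sum>\<tau>\<in>T. p \<bullet> d i (\<tau> i))"
    unfolding D_def avg_def N_def by (simp add: inner_sum_right sum_distrib_left sum.swap[of _ T])
  ultimately have cross: "(\<Sum>\<tau>\<in>T. p \<bullet> D \<tau>) = 0"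
    by simp
  have "(\<Sum>\<tau>\<in>T. (norm (D \<tau>))\<^sup>2) = 1 / N\<^sup>2 * (\<Sum>l\<in>UNIV. \<Sum>i\<in>UNIV. \<Sum>\<tau>\<in>T. d i (\<tau> i) \<bullet> d l (\<tau> l))"
    unfolding D_def avg_def N_def power2_norm_eq_inner inner_scaleR_left inner_scaleR_right
      inner_sum_left inner_sum_right
    by (simp add: power2_eq_square sum_distrib_left sum.swap[of _ T])
  moreover have "(\<Sum>\<tau>\<in>T. d i (\<tau> i) \<bullet> d l (\<tau> l))
      = (if i = l then real (card T) / real m * (\<Sum>a=1..m. (norm (d i a))\<^sup>2) else 0)" for i l
    unfolding T_def by (rule sum_node_draws_inner[OF m centered])
  ultimately have square: "(\<Sum>\<tau>\<in>T. (norm (D \<tau>))\<^sup>2)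
      = real (card T) / N\<^sup>2 / real m * (\<Sum>i\<in>UNIV. \<Sum>a=1..m. (norm (d i a))\<^sup>2)"
    by (simp add: sum_distrib_left)
  have "(norm (p - \<alpha> *\<^sub>R D \<tau>))\<^sup>2 = (norm p)\<^sup>2 - 2 * \<alpha> * (p \<bullet> D \<tau>) + \<alpha>\<^sup>2 * (norm (D \<tau>))\<^sup>2" for \<tau>
    unfolding power2_norm_eq_inner
    by (simp add: inner_diff_left inner_diff_right inner_commute algebra_simps power2_eq_square)
  then have "(\<Sum>\<tau>\<in>T. (norm (p - \<alpha> *\<^sub>R D \<tau>))\<^sup>2)
      = real (card T) * (norm p)\<^sup>2 - 2 * \<alpha> * (\<Sum>\<tau>\<in>T. p \<bullet> D \<tau>) + \<alpha>\<^sup>2 * (\<Sum>\<tau>\<in>T. (norm (D \<tau>))\<^sup>2)"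
    by (simp add: sum.distrib sum_subtractf sum_distrib_left)
  then show ?thesis
    unfolding cross square by (simp add: T_def N_def D_def field_simps)
qed

section \<open>Averages over the SAGA table\<close>

lemma norm_diff_power2_le:
  fixes u v :: "'a::real_inner"
  assumes "\<eta> > 0"
  shows "(norm (u - v))\<^sup>2 \<le> (1 + \<eta>) * (norm u)\<^sup>2 + (1 + 1 / \<eta>) * (norm v)\<^sup>2"
proof -
  have "0 \<le> (norm (\<eta> *\<^sub>R u + v))\<^sup>2 / \<eta>"
    using assms by simp
  also have "\<dots> = \<eta> * (norm u)\<^sup>2 + 2 * (u \<bullet> v) + (norm v)\<^sup>2 / \<eta>"
    using assms unfolding power2_norm_eq_inner
    by (simp add: inner_add_left inner_add_right inner_commute field_simps power2_eq_square)
  finally show ?thesis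
    using assms unfolding power2_norm_eq_inner
    by (simp add: inner_diff_left inner_diff_right inner_commute algebra_simps)
qed

lemma sum_norm_sq_sub_mean_le:
  fixes Y :: "'a \<Rightarrow> 'v::real_inner"
  assumes "finite A"
  shows "(\<Sum>a\<in>A. (norm (Y a - (1 / real (card A)) *\<^sub>R (\<Sum>b\<in>A. Y b)))\<^sup>2) \<le> (\<Sum>a\<in>A. (norm (Y a))\<^sup>2)"
proof (cases "A = {}")
  case False
  define \<mu> where "\<mu> = (1 / real (card A)) *\<^sub>R (\<Sum>b\<in>A. Y b)"
  have sum_Y: "(\<Sum>b\<in>A. Y b) = real (card A) *\<^sub>R \<mu>"
    using False assms by (simp add: \<mu>_def)
  have "(\<Sum>a\<in>A. (norm (Y a - \<mu>))\<^sup>2) = (\<Sum>a\<in>A. (norm (Y a))\<^sup>2 - 2 * (Y a \<bullet> \<mu>) + (norm \<mu>)\<^sup>2)"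
    unfolding power2_norm_eq_inner
    by (intro sum.cong refl) (simp add: inner_diff_left inner_diff_right inner_commute)
  also have "\<dots> = (\<Sum>a\<in>A. (norm (Y a))\<^sup>2) - 2 * ((\<Sum>a\<in>A. Y a) \<bullet> \<mu>) + real (card A) * (norm \<mu>)\<^sup>2"
    by (simp add: sum.distrib sum_subtractf sum_distrib_left inner_sum_left)
  also have "\<dots> = (\<Sum>a\<in>A. (norm (Y a))\<^sup>2) - real (card A) * (norm \<mu>)\<^sup>2"
    by (simp add: sum_Y power2_norm_eq_inner)
  finally show ?thesis
    unfolding \<mu>_def by simp
qed simp

definition table_mean :: "nat \<Rightarrow> ('n::finite \<Rightarrow> nat \<Rightarrow> real) \<Rightarrow> real" where
  "table_mean m F = (1 / real CARD('n)) * (\<Sum>i\<in>UNIV. (1 / real m) * (\<Sum>j=1..m. F i j))"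

lemma table_mean_add: "table_mean m (\<lambda>i j. F i j + G i j) = table_mean m F + table_mean m G"
  by (simp add: table_mean_def sum.distrib distrib_left)

lemma table_mean_cmult: "table_mean m (\<lambda>i j. a * F i j) = a * table_mean m F"
  by (simp add: table_mean_def sum_distrib_left mult.left_commute)

lemma table_mean_const: "m \<ge> 1 \<Longrightarrow> table_mean m (\<lambda>i j. a) = a"
  by (simp add: table_mean_def)

lemma table_mean_row:
  "m \<ge> 1 \<Longrightarrow> table_mean m (\<lambda>i j. F i) = (1 / real CARD('n)) * (\<Sum>i\<in>(UNIV :: 'n::finite set). F i)"
  by (simp add: table_mean_def)

lemma table_mean_cong: "(\<And>i j. j \<in> {1..m} \<Longrightarrow> F i j = G i j) \<Longrightarrow> table_mean m F = table_mean m G"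
  by (simp add: table_mean_def)

lemma table_mean_mono: "(\<And>i j. j \<in> {1..m} \<Longrightarrow> F i j \<le> G i j) \<Longrightarrow> table_mean m F \<le> table_mean m G"
  unfolding table_mean_def by (intro mult_left_mono sum_mono) auto

lemma sum_table_mean: "(\<Sum>s\<in>S. table_mean m (F s)) = table_mean m (\<lambda>i j. \<Sum>s\<in>S. F s i j)"
  by (simp add: table_mean_def sum_distrib_left sum.swap[of _ S])

definition table_spread :: "nat \<Rightarrow> 'v::real_normed_vector \<Rightarrow> ('n::finite \<Rightarrow> nat \<Rightarrow> 'v) \<Rightarrow> real" where
  "table_spread m c z = table_mean m (\<lambda>i j. (norm (c - z i j))\<^sup>2)"

lemma tk_eq_table_spread: "tk m x z = table_spread m (avg x) z"
  by (simp add: tk_def table_spread_def table_mean_def)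

lemma table_spread_shift_le:
  fixes z :: "'n::finite \<Rightarrow> nat \<Rightarrow> 'v::real_inner"
  assumes "m \<ge> 1" "\<eta> > 0"
  shows "table_spread m (c - a) z \<le> (1 + \<eta>) * table_spread m c z + (1 + 1 / \<eta>) * (norm a)\<^sup>2"
proof -
  have "(norm (c - a - z i j))\<^sup>2
      \<le> (1 + \<eta>) * (norm (c - z i j))\<^sup>2 + (1 + 1 / \<eta>) * (norm a)\<^sup>2" for i j
    using norm_diff_power2_le[OF assms(2), of "c - z i j" a] by (simp add: algebra_simps)
  then have "table_spread m (c - a) z
      \<le> table_mean m (\<lambda>i j. (1 + \<eta>) * (norm (c - z i j))\<^sup>2 + (1 + 1 / \<eta>) * (norm a)\<^sup>2)"
    unfolding table_spread_def by (intro table_mean_mono)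
  then show ?thesis
    using assms(1) by (simp add: table_mean_add table_mean_cmult table_mean_const table_spread_def)
qed

definition saga_refresh :: "('n \<Rightarrow> 'v) \<Rightarrow> ('n \<Rightarrow> nat \<Rightarrow> 'v) \<Rightarrow> ('n \<Rightarrow> nat) \<Rightarrow> 'n \<Rightarrow> nat \<Rightarrow> 'v" where
  "saga_refresh x z \<sigma> = (\<lambda>i j. if j = \<sigma> i then x i else z i j)"

lemma sum_table_spread_refresh:
  fixes x :: "'n::finite \<Rightarrow> 'v::real_normed_vector"
  assumes m: "m \<ge> 1"
  shows "(\<Sum>\<sigma>\<in>node_draws m. table_spread m c (saga_refresh x z \<sigma>))
       = real (card (node_draws m :: ('n \<Rightarrow> nat) set))
         * (1 / (real m * real CARD('n)) * (\<Sum>i\<in>UNIV. (norm (c - x i))\<^sup>2)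
            + (1 - 1 / real m) * table_spread m c z)"
proof -
  define cT where "cT = real (card (node_draws m :: ('n \<Rightarrow> nat) set))"
  define F where "F i j a = (norm (c - (if j = a then x i else z i j)))\<^sup>2" for i j a
  have row: "(\<Sum>\<sigma>\<in>node_draws m. F i j (\<sigma> i))
      = cT / real m * ((norm (c - x i))\<^sup>2 + (real m - 1) * (norm (c - z i j))\<^sup>2)"
    if "j \<in> {1..m}" for i j
  proof -
    have "(\<Sum>a=1..m. F i j a) = F i j j + (\<Sum>a\<in>{1..m}-{j}. (norm (c - z i j))\<^sup>2)"
      using that by (simp add: sum.remove F_def)
    then have "(\<Sum>a=1..m. F i j a) = (norm (c - x i))\<^sup>2 + (real m - 1) * (norm (c - z i j))\<^sup>2"
      using that m by (simp add: F_def of_nat_diff)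
    then show ?thesis
      using sum_node_draws_component[OF m, of "F i j" i] by (simp add: cT_def)
  qed
  have "(\<Sum>\<sigma>\<in>node_draws m. table_spread m c (saga_refresh x z \<sigma>))
      = table_mean m
          (\<lambda>i j. cT / real m * ((norm (c - x i))\<^sup>2 + (real m - 1) * (norm (c - z i j))\<^sup>2))"
    unfolding table_spread_def sum_table_mean saga_refresh_def
    by (rule table_mean_cong) (rule row[unfolded F_def])
  also have "\<dots> = cT / real m
      * (table_mean m (\<lambda>i j. (norm (c - x i))\<^sup>2) + (real m - 1) * table_spread m c z)"
    by (simp only: table_mean_cmult table_mean_add table_spread_def)
  also have "\<dots> = cT * (1 / (real m * real CARD('n)) * (\<Sum>i\<in>UNIV. (norm (c - x i))\<^sup>2)
      + (1 - 1 / real m) * table_spread m c z)"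
    using m by (simp add: table_mean_row field_simps)
  finally show ?thesis unfolding cT_def .
qed

lemma sum_table_spread_centered_noise:
  fixes d w :: "'n::finite \<Rightarrow> nat \<Rightarrow> 'v::real_inner"
  assumes m: "m \<ge> 1" and centered: "\<And>i. (\<Sum>a=1..m. d i a) = 0"
  shows "(\<Sum>\<tau>\<in>node_draws m. table_spread m (p - \<alpha> *\<^sub>R avg (\<lambda>i. d i (\<tau> i))) w)
       = real (card (node_draws m :: ('n \<Rightarrow> nat) set))
         * (table_spread m p w
            + \<alpha>\<^sup>2 / (real CARD('n))\<^sup>2 / real m * (\<Sum>i\<in>UNIV. \<Sum>a=1..m. (norm (d i a))\<^sup>2))"
proof -
  have "(\<Sum>\<tau>\<in>node_draws m. (norm (p - \<alpha> *\<^sub>R avg (\<lambda>i. d i (\<tau> i)) - w i j))\<^sup>2)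
      = real (card (node_draws m :: ('n \<Rightarrow> nat) set))
         * ((norm (p - w i j))\<^sup>2
            + \<alpha>\<^sup>2 / (real CARD('n))\<^sup>2 / real m * (\<Sum>i\<in>UNIV. \<Sum>a=1..m. (norm (d i a))\<^sup>2))"
    for i j
    using sum_node_draws_norm_sq_centered[OF m centered, of "p - w i j" \<alpha>]
    by (simp add: algebra_simps)
  then show ?thesis
    using m
    by (simp add: table_spread_def sum_table_mean table_mean_cmult table_mean_add table_mean_const)
qed

section \<open>One GT-SAGA step averaged over its fresh draws\<close>

definition saga_noise ::
    "('n \<Rightarrow> nat \<Rightarrow> 'v \<Rightarrow> 'v::real_vector) \<Rightarrow> nat \<Rightarrow> ('n \<Rightarrow> 'v) \<Rightarrow> ('n \<Rightarrow> nat \<Rightarrow> 'v)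
      \<Rightarrow> 'n \<Rightarrow> nat \<Rightarrow> 'v" where
  "saga_noise grad m x z i a = (grad i a (x i) - grad i a (z i a))
     - (1 / real m) *\<^sub>R (\<Sum>b=1..m. grad i b (x i) - grad i b (z i b))"

lemma saga_noise_centered:
  assumes "m \<ge> 1"
  shows "(\<Sum>a=1..m. saga_noise grad m x z i a) = 0"
  using assms by (simp add: saga_noise_def sum_subtractf sum_constant_scaleR)

lemma avg_gt_g:
  fixes grad :: "'n::finite \<Rightarrow> nat \<Rightarrow> 'v \<Rightarrow> 'v::euclidean_space"
  shows "avg (gt_g grad m x z \<tau>) = avg_grad grad m x + avg (\<lambda>i. saga_noise grad m x z i (\<tau> i))"
proof -
  have "gt_g grad m x z \<tau> i
      = (1 / real m) *\<^sub>R (\<Sum>j=1..m. grad i j (x i)) + saga_noise grad m x z i (\<tau> i)" for i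
    by (simp add: gt_g_def saga_noise_def sum_subtractf algebra_simps)
  then show ?thesis
    by (simp add: avg_grad_def avg_def sum.distrib scaleR_add_right)
qed

lemma sum_saga_noise_sq_le:
  fixes grad :: "'n::finite \<Rightarrow> nat \<Rightarrow> 'v \<Rightarrow> 'v::real_inner"
  assumes m: "m \<ge> 1"
    and smooth: "\<And>i j u v. j \<in> {1..m} \<Longrightarrow> norm (grad i j u - grad i j v) \<le> L * norm (u - v)"
  shows "(\<Sum>i\<in>UNIV. \<Sum>a=1..m. (norm (saga_noise grad m x z i a))\<^sup>2)
       \<le> 2 * L\<^sup>2 * real m * (consensus_err x + real CARD('n) * tk m x z)"
proof -
  define Y where "Y i a = grad i a (x i) - grad i a (z i a)" for i a
  have noise_le: "(\<Sum>a=1..m. (norm (saga_noise grad m x z i a))\<^sup>2)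
      \<le> (\<Sum>a=1..m. (norm (Y i a))\<^sup>2)" for i
    using sum_norm_sq_sub_mean_le[of "{1..m}" "Y i"] by (simp add: saga_noise_def Y_def)
  have Y_le: "(norm (Y i a))\<^sup>2
      \<le> 2 * L\<^sup>2 * (norm (x i - avg x))\<^sup>2 + 2 * L\<^sup>2 * (norm (avg x - z i a))\<^sup>2"
    if "a \<in> {1..m}" for i a
  proof -
    have "(norm (Y i a))\<^sup>2 \<le> (L * norm ((x i - avg x) - (z i a - avg x)))\<^sup>2"
      unfolding Y_def by (rule power_mono) (use smooth[OF that] in auto)
    also have "\<dots> \<le> L\<^sup>2 * (2 * (norm (x i - avg x))\<^sup>2 + 2 * (norm (z i a - avg x))\<^sup>2)"
      using norm_diff_power2_le[of 1 "x i - avg x" "z i a - avg x"]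
      by (simp add: power_mult_distrib mult_left_mono)
    finally show ?thesis
      by (simp add: norm_minus_commute algebra_simps)
  qed
  have "(\<Sum>i\<in>UNIV. \<Sum>a=1..m. (norm (saga_noise grad m x z i a))\<^sup>2)
      \<le> (\<Sum>i\<in>UNIV. \<Sum>a=1..m. 2 * L\<^sup>2 * (norm (x i - avg x))\<^sup>2 + 2 * L\<^sup>2 * (norm (avg x - z i a))\<^sup>2)"
    by (intro sum_mono order.trans[OF noise_le]) (auto intro: Y_le)
  also have "\<dots> = 2 * L\<^sup>2 * real m * (consensus_err x + real CARD('n) * tk m x z)"
    using m by (simp add: consensus_err_def tk_def sum.distrib sum_distrib_left algebra_simps)
  finally show ?thesis .
qed

text \<open>\<open>\<alpha>\<^sup>2 * saga_variance grad m x z\<close> is the average over \<open>\<tau>\<close> of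
  \<open>\<parallel>\<alpha> *\<^sub>R (avg (gt_g grad m x z \<tau>) - avg_grad grad m x)\<parallel>\<^sup>2\<close>.\<close>

definition saga_variance ::
    "('n::finite \<Rightarrow> nat \<Rightarrow> 'v \<Rightarrow> 'v::real_normed_vector) \<Rightarrow> nat \<Rightarrow> ('n \<Rightarrow> 'v)
      \<Rightarrow> ('n \<Rightarrow> nat \<Rightarrow> 'v) \<Rightarrow> real" where
  "saga_variance grad m x z
     = 1 / (real CARD('n))\<^sup>2 / real m * (\<Sum>i\<in>UNIV. \<Sum>a=1..m. (norm (saga_noise grad m x z i a))\<^sup>2)"

lemma saga_variance_le:
  fixes grad :: "'n::finite \<Rightarrow> nat \<Rightarrow> 'v \<Rightarrow> 'v::real_inner"
  assumes m: "m \<ge> 1"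
    and smooth: "\<And>i j u v. j \<in> {1..m} \<Longrightarrow> norm (grad i j u - grad i j v) \<le> L * norm (u - v)"
  shows "saga_variance grad m x z
       \<le> 2 * L\<^sup>2 / (real CARD('n))\<^sup>2 * (consensus_err x + real CARD('n) * tk m x z)"
proof -
  have "saga_variance grad m x z
      \<le> 1 / (real CARD('n))\<^sup>2 / real m
          * (2 * L\<^sup>2 * real m * (consensus_err x + real CARD('n) * tk m x z))"
    unfolding saga_variance_def by (intro mult_left_mono sum_saga_noise_sq_le[OF m smooth]) auto
  then show ?thesis
    using m by simp
qed

lemma expected_spread_step_eq:
  fixes grad :: "'n::finite \<Rightarrow> nat \<Rightarrow> 'v \<Rightarrow> 'v::euclidean_space"
  assumes m: "m \<ge> 1"
  shows "(\<Sum>\<tau>\<in>node_draws m. \<Sum>\<sigma>\<in>node_draws m.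
            table_spread m (avg x - \<alpha> *\<^sub>R avg (gt_g grad m x z \<tau>)) (saga_refresh x z \<sigma>))
          / (real (card (node_draws m :: ('n \<Rightarrow> nat) set)))\<^sup>2
       = (\<Sum>\<sigma>\<in>node_draws m. table_spread m (avg x - \<alpha> *\<^sub>R avg_grad grad m x) (saga_refresh x z \<sigma>))
          / real (card (node_draws m :: ('n \<Rightarrow> nat) set))
         + \<alpha>\<^sup>2 * saga_variance grad m x z"
proof -
  define cT where "cT = real (card (node_draws m :: ('n \<Rightarrow> nat) set))"
  define V where "V = \<alpha>\<^sup>2 * saga_variance grad m x z"
  define S where "S \<sigma> = table_spread m (avg x - \<alpha> *\<^sub>R avg_grad grad m x) (saga_refresh x z \<sigma>)" for \<sigma>
  have "cT > 0"
    using m by (simp add: cT_def card_PiE)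
  have "(\<Sum>\<tau>\<in>node_draws m.
          table_spread m (avg x - \<alpha> *\<^sub>R avg (gt_g grad m x z \<tau>)) (saga_refresh x z \<sigma>))
      = cT * (S \<sigma> + V)" for \<sigma>
    using sum_table_spread_centered_noise[where d = "saga_noise grad m x z"
        and p = "avg x - \<alpha> *\<^sub>R avg_grad grad m x" and w = "saga_refresh x z \<sigma>",
        OF m saga_noise_centered[OF m]]
    by (simp add: avg_gt_g cT_def S_def V_def saga_variance_def algebra_simps)
  then have "(\<Sum>\<tau>\<in>node_draws m. \<Sum>\<sigma>\<in>node_draws m.
          table_spread m (avg x - \<alpha> *\<^sub>R avg (gt_g grad m x z \<tau>)) (saga_refresh x z \<sigma>))
      = (\<Sum>\<sigma>\<in>node_draws m. cT * (S \<sigma> + V))"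
    by (subst sum.swap) simp
  also have "\<dots> = cT\<^sup>2 * ((\<Sum>\<sigma>\<in>node_draws m. S \<sigma>) / cT + V)"
    using \<open>cT > 0\<close>
    by (simp add: sum.distrib sum_distrib_left sum_distrib_right cT_def power2_eq_square field_simps)
  finally show ?thesis
    using \<open>cT > 0\<close> unfolding cT_def[symmetric] by (simp add: S_def V_def)
qed

lemma expected_refreshed_spread_le:
  fixes x :: "'n::finite \<Rightarrow> 'v::real_inner"
  assumes m: "m \<ge> 1" and "\<eta> > 0"
  shows "(\<Sum>\<sigma>\<in>node_draws m. table_spread m (c - a) (saga_refresh x z \<sigma>))
          / real (card (node_draws m :: ('n \<Rightarrow> nat) set))
       \<le> (1 + \<eta>) * (1 / (real m * real CARD('n)) * (\<Sum>i\<in>UNIV. (norm (c - x i))\<^sup>2)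
                      + (1 - 1 / real m) * table_spread m c z)
         + (1 + 1 / \<eta>) * (norm a)\<^sup>2"
proof -
  define cT where "cT = real (card (node_draws m :: ('n \<Rightarrow> nat) set))"
  have "cT > 0"
    using m by (simp add: cT_def card_PiE)
  have "(\<Sum>\<sigma>\<in>node_draws m. table_spread m (c - a) (saga_refresh x z \<sigma>))
      \<le> (\<Sum>\<sigma>\<in>node_draws m.
            (1 + \<eta>) * table_spread m c (saga_refresh x z \<sigma>) + (1 + 1 / \<eta>) * (norm a)\<^sup>2)"
    by (intro sum_mono table_spread_shift_le) (use assms in auto)
  also have "\<dots> = cT * ((1 + \<eta>) * (1 / (real m * real CARD('n)) * (\<Sum>i\<in>UNIV. (norm (c - x i))\<^sup>2)
                  + (1 - 1 / real m) * table_spread m c z) + (1 + 1 / \<eta>) * (norm a)\<^sup>2)"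
    by (simp only: sum.distrib sum_distrib_left[symmetric] sum_table_spread_refresh[OF m]
        sum_constant)
      (simp add: cT_def algebra_simps)
  finally show ?thesis
    using \<open>cT > 0\<close> unfolding cT_def[symmetric] by (simp add: pos_divide_le_eq mult.commute)
qed

text \<open>The factors \<open>1 + 1 / (2 * m)\<close> and \<open>1 + 2 * m\<close> are \<open>1 + \<eta>\<close> and \<open>1 + 1 / \<eta>\<close>
  in Young's inequality with \<open>\<eta> = 1 / (2 * m)\<close>.\<close>

lemma step_coefficients_le:
  fixes c t q N :: real
  assumes "m \<ge> 1" "N > 0" "c \<ge> 0" "t \<ge> 0" "q \<ge> 0"
  shows "(1 + 1 / (2 * real m)) * (c / (real m * N) + (1 - 1 / real m) * t) + (1 + 2 * real m) * q
           + (c / (4 * real m * N) + t / (4 * real m))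
       \<le> 9 / (4 * real m * N) * c + (1 - 1 / (4 * real m)) * t + 4 * real m * q"
proof -
  have "real m > 0"
    using assms(1) by simp
  then have "(1 + 1 / (2 * real m)) * (c / (real m * N) + (1 - 1 / real m) * t) + (1 + 2 * real m) * q
           + (c / (4 * real m * N) + t / (4 * real m))
      = ((1 + 1 / (2 * real m)) / (real m * N) + 1 / (4 * real m * N)) * c
        + ((1 + 1 / (2 * real m)) * (1 - 1 / real m) + 1 / (4 * real m)) * t + (1 + 2 * real m) * q"
    using \<open>N > 0\<close> by (simp add: field_simps)
  also have "\<dots> \<le> 9 / (4 * real m * N) * c + (1 - 1 / (4 * real m)) * t + 4 * real m * q"
  proof -
    have "(1 + 1 / (2 * real m)) / (real m * N) + 1 / (4 * real m * N) \<le> 9 / (4 * real m * N)"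
      and "(1 + 1 / (2 * real m)) * (1 - 1 / real m) + 1 / (4 * real m) \<le> 1 - 1 / (4 * real m)"
      and "1 + 2 * real m \<le> 4 * real m"
      using assms by (simp_all add: field_simps)
    then show ?thesis
      using assms by (intro add_mono mult_right_mono) auto
  qed
  finally show ?thesis .
qed

lemma scaled_saga_variance_le:
  fixes grad :: "'n::finite \<Rightarrow> nat \<Rightarrow> 'v \<Rightarrow> 'v::real_inner"
  assumes m: "m \<ge> 1"
    and smooth: "\<And>i j u v. j \<in> {1..m} \<Longrightarrow> norm (grad i j u - grad i j v) \<le> L * norm (u - v)"
    and step: "\<alpha>\<^sup>2 * L\<^sup>2 \<le> real CARD('n) / (8 * real m)"
  shows "\<alpha>\<^sup>2 * saga_variance grad m x z
       \<le> consensus_err x / (4 * real m * real CARD('n)) + tk m x z / (4 * real m)"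
proof -
  define N where "N = real CARD('n)"
  define K where "K = consensus_err x + N * tk m x z"
  have "N > 0"
    by (simp add: N_def)
  have "K \<ge> 0"
    using \<open>N > 0\<close> by (simp add: K_def consensus_err_def tk_def sum_nonneg)
  have "\<alpha>\<^sup>2 * saga_variance grad m x z \<le> \<alpha>\<^sup>2 * (2 * L\<^sup>2 / N\<^sup>2 * K)"
    unfolding N_def K_def by (intro mult_left_mono saga_variance_le[OF m smooth]) auto
  also have "\<dots> = 2 * (\<alpha>\<^sup>2 * L\<^sup>2) / N\<^sup>2 * K"
    by simp
  also have "\<dots> \<le> 2 * (N / (8 * real m)) / N\<^sup>2 * K"
    using step \<open>K \<ge> 0\<close> unfolding N_def[symmetric] by (intro mult_right_mono divide_right_mono) auto
  also have "\<dots> = consensus_err x / (4 * real m * N) + tk m x z / (4 * real m)"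
    using m \<open>N > 0\<close> by (simp add: K_def field_simps power2_eq_square)
  finally show ?thesis
    unfolding N_def .
qed

lemma expected_table_spread_step_le:
  fixes grad :: "'n::finite \<Rightarrow> nat \<Rightarrow> 'v \<Rightarrow> 'v::euclidean_space"
  assumes m: "m \<ge> 1"
    and smooth: "\<And>i j u v. j \<in> {1..m} \<Longrightarrow> norm (grad i j u - grad i j v) \<le> L * norm (u - v)"
    and step: "\<alpha>\<^sup>2 * L\<^sup>2 \<le> real CARD('n) / (8 * real m)"
  shows "(\<Sum>\<tau>\<in>node_draws m. \<Sum>\<sigma>\<in>node_draws m.
            table_spread m (avg x - \<alpha> *\<^sub>R avg (gt_g grad m x z \<tau>)) (saga_refresh x z \<sigma>))
          / (real (card (node_draws m :: ('n \<Rightarrow> nat) set)))\<^sup>2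
     \<le> (1 - 1 / (4 * real m)) * tk m x z
        + 4 * real m * \<alpha>\<^sup>2 * (norm (avg_grad grad m x))\<^sup>2
        + 9 / (4 * real m * real CARD('n)) * consensus_err x"
proof -
  have nonneg: "consensus_err x \<ge> 0" "tk m x z \<ge> 0"
    by (auto simp: consensus_err_def tk_def sum_nonneg)
  have "real CARD('n) > 0"
    by simp
  have "1 / (1 / (2 * real m)) = 2 * real m"
    by simp
  then have refreshed: "(\<Sum>\<sigma>\<in>node_draws m.
          table_spread m (avg x - \<alpha> *\<^sub>R avg_grad grad m x) (saga_refresh x z \<sigma>))
          / real (card (node_draws m :: ('n \<Rightarrow> nat) set))
       \<le> (1 + 1 / (2 * real m)) * (consensus_err x / (real m * real CARD('n)) + (1 - 1 / real m) * tk m x z)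
         + (1 + 2 * real m) * (\<alpha>\<^sup>2 * (norm (avg_grad grad m x))\<^sup>2)"
    using expected_refreshed_spread_le[OF m, of "1 / (2 * real m)" "avg x" "\<alpha> *\<^sub>R avg_grad grad m x" x z]
      m
    by (simp add: consensus_err_def tk_eq_table_spread norm_minus_commute power_mult_distrib)
  show ?thesis
    unfolding expected_spread_step_eq[OF m]
    using step_coefficients_le[OF m \<open>real CARD('n) > 0\<close> nonneg
        zero_le_power2[of "\<alpha> * norm (avg_grad grad m x)"]]
      refreshed scaled_saga_variance_le[where grad = grad and x = x and z = z, OF m smooth step]
    by (simp add: power_mult_distrib algebra_simps)
qed

section \<open>The GT-SAGA recursion\<close>

lemma gt_saga_cong_draws:
  assumes "\<And>t. t < k \<Longrightarrow> tau t = tau' t \<and> s t = s' t"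
  shows "gt_saga W grad m \<alpha> x0 tau s k = gt_saga W grad m \<alpha> x0 tau' s' k"
  using assms
proof (induction k)
  case (Suc k)
  then have "gt_saga W grad m \<alpha> x0 tau s k = gt_saga W grad m \<alpha> x0 tau' s' k"
    and "tau k = tau' k" "s k = s' k"
    by auto
  then show ?case
    by (simp only: gt_saga.simps)
qed simp

lemma avg_add: "avg (\<lambda>i. u i + v i) = avg u + avg (v :: 'n::finite \<Rightarrow> 'v::real_vector)"
  unfolding avg_def by (simp add: sum.distrib scaleR_add_right)

lemma avg_diff: "avg (\<lambda>i. u i - v i) = avg u - avg (v :: 'n::finite \<Rightarrow> 'v::real_vector)"
  unfolding avg_def by (simp add: sum_subtractf scaleR_diff_right)

lemma avg_scaleR: "avg (\<lambda>i. c *\<^sub>R v i) = c *\<^sub>R avg (v :: 'n::finite \<Rightarrow> 'v::real_vector)"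
  unfolding avg_def by (simp add: scaleR_sum_right)

lemma avg_mix:
  fixes W :: "real^'n::finite^'n" and v :: "'n \<Rightarrow> 'v::real_vector"
  assumes "\<And>r. (\<Sum>i\<in>UNIV. W $ i $ r) = 1"
  shows "avg (\<lambda>i. \<Sum>r\<in>UNIV. W $ i $ r *\<^sub>R v r) = avg v"
proof -
  have "(\<Sum>i\<in>UNIV. \<Sum>r\<in>UNIV. W $ i $ r *\<^sub>R v r) = (\<Sum>r\<in>UNIV. (\<Sum>i\<in>UNIV. W $ i $ r) *\<^sub>R v r)"
    by (subst sum.swap) (simp add: scaleR_sum_left)
  then show ?thesis
    using assms by (simp add: avg_def)
qed

lemma gt_saga_tracks_avg_gradient:
  fixes W :: "real^'n::finite^'n"
  assumes col: "\<And>r. (\<Sum>i\<in>UNIV. W $ i $ r) = 1"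
  shows "avg (fst (snd (gt_saga W grad m \<alpha> x0 tau s k)))
       = avg (snd (snd (snd (gt_saga W grad m \<alpha> x0 tau s k))))"
proof (induction k)
  case 0
  then show ?case by (simp add: avg_def)
next
  case (Suc k)
  obtain x y z g where "gt_saga W grad m \<alpha> x0 tau s k = (x, y, z, g)"
    by (cases "gt_saga W grad m \<alpha> x0 tau s k") auto
  with Suc show ?case
    by (simp add: Let_def avg_mix[OF col] avg_diff avg_add)
qed

lemma tk_gt_saga_Suc:
  fixes W :: "real^'n::finite^'n" and grad :: "'n \<Rightarrow> nat \<Rightarrow> 'v \<Rightarrow> 'v::euclidean_space"
    and m :: nat and \<alpha> :: real and x0 :: 'v and tau s :: "nat \<Rightarrow> 'n \<Rightarrow> nat" and k :: nat
  assumes col: "\<And>r. (\<Sum>i\<in>UNIV. W $ i $ r) = 1"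
  defines "x \<equiv> gt_x W grad m \<alpha> x0 tau s k" and "z \<equiv> gt_z W grad m \<alpha> x0 tau s k"
  shows "tk m (gt_x W grad m \<alpha> x0 tau s (Suc k)) (gt_z W grad m \<alpha> x0 tau s (Suc k))
       = table_spread m (avg x - \<alpha> *\<^sub>R avg (gt_g grad m x z (tau k))) (saga_refresh x z (s k))"
proof -
  obtain y g where state: "gt_saga W grad m \<alpha> x0 tau s k = (x, y, z, g)"
    unfolding x_def z_def gt_x_def gt_z_def by (cases "gt_saga W grad m \<alpha> x0 tau s k") auto
  have "avg y = avg g"
    using gt_saga_tracks_avg_gradient[OF col, of grad m \<alpha> x0 tau s k] state by simp
  then show ?thesis
    by (simp add: tk_eq_table_spread gt_x_def gt_z_def state Let_def saga_refresh_def
        avg_mix[OF col] avg_diff avg_add avg_scaleR)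
qed

section \<open>Conditional expectations with respect to uniform draws\<close>

lemma sets_Collect_restrict_eq:
  fixes val :: "'j \<Rightarrow> 'a \<Rightarrow> nat"
  assumes "finite J" "\<And>j a. j \<in> J \<Longrightarrow> {\<omega> \<in> space N. val j \<omega> = a} \<in> sets N" "v \<in> extensional J"
  shows "{\<omega> \<in> space N. restrict (\<lambda>j. val j \<omega>) J = v} \<in> sets N"
proof -
  have "{\<omega> \<in> space N. restrict (\<lambda>j. val j \<omega>) J = v} = {\<omega> \<in> space N. \<forall>j\<in>J. val j \<omega> = v j}"
    using assms(3) by (auto simp: fun_eq_iff restrict_def extensional_def)
  also have "\<dots> \<in> sets N"
    using assms(1,2) by (intro sets.sets_Collect_finite_All) auto
  finally show ?thesis .
qed

lemma borel_measurable_restrict_comp: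
  fixes val :: "'j \<Rightarrow> 'a \<Rightarrow> nat" and G :: "('j \<Rightarrow> nat) \<Rightarrow> real"
  assumes "finite J" "\<And>j a. j \<in> J \<Longrightarrow> {\<omega> \<in> space N. val j \<omega> = a} \<in> sets N"
  shows "(\<lambda>\<omega>. G (restrict (\<lambda>j. val j \<omega>) J)) \<in> borel_measurable N"
proof -
  have countable: "countable (PiE J (\<lambda>_. UNIV :: nat set))"
    using assms(1) by (rule countable_PiE) simp
  have "(\<lambda>\<omega>. restrict (\<lambda>j. val j \<omega>) J) \<in> measurable N (count_space (PiE J (\<lambda>_. UNIV)))"
    unfolding measurable_count_space_eq_countable[OF countable]
  proof safe
    fix v :: "'j \<Rightarrow> nat" assume "v \<in> PiE J (\<lambda>_. UNIV)"
    then have "{\<omega> \<in> space N. restrict (\<lambda>j. val j \<omega>) J = v} \<in> sets N"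
      using assms by (intro sets_Collect_restrict_eq) (auto simp: PiE_def)
    then show "(\<lambda>\<omega>. restrict (\<lambda>j. val j \<omega>) J) -` {v} \<inter> space N \<in> sets N"
      by (simp add: vimage_def Int_def conj_commute)
  qed auto
  then show ?thesis
    by (rule measurable_compose) simp
qed

definition completions :: "nat \<Rightarrow> 'j set \<Rightarrow> 'j set \<Rightarrow> ('j \<Rightarrow> nat) \<Rightarrow> ('j \<Rightarrow> nat) set" where
  "completions m J I h = {v \<in> PiE J (\<lambda>_. {1..m}). restrict v I = h}"

lemma sum_weighted_fibre_mean:
  fixes \<Phi> :: "'a \<Rightarrow> real"
  assumes "finite D"
  shows "(\<Sum>v\<in>D. f (r v)
            * ((\<Sum>u\<in>{u \<in> D. r u = r v}. \<Phi> u) / real (card {u \<in> D. r u = r v})))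
       = (\<Sum>v\<in>D. f (r v) * \<Phi> v)"
proof -
  define mean where "mean y = (\<Sum>u\<in>{u \<in> D. r u = y}. \<Phi> u) / real (card {u \<in> D. r u = y})" for y
  have fibre: "(\<Sum>v\<in>{v \<in> D. r v = y}. f (r v) * mean (r v)) = (\<Sum>v\<in>{v \<in> D. r v = y}. f (r v) * \<Phi> v)"
    if "y \<in> r ` D" for y
  proof -
    have "card {v \<in> D. r v = y} \<noteq> 0"
      using that assms by auto
    then have "(\<Sum>v\<in>{v \<in> D. r v = y}. f y * mean y) = f y * (\<Sum>u\<in>{u \<in> D. r u = y}. \<Phi> u)"
      by (simp add: mean_def)
    then show ?thesis
      by (auto simp: sum_distrib_left intro!: sum.cong)
  qed
  have "(\<Sum>v\<in>D. f (r v) * mean (r v)) = (\<Sum>y\<in>r ` D. \<Sum>v\<in>{v \<in> D. r v = y}. f (r v) * mean (r v))"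
    using assms by (intro sum.group[symmetric]) auto
  also have "\<dots> = (\<Sum>y\<in>r ` D. \<Sum>v\<in>{v \<in> D. r v = y}. f (r v) * \<Phi> v)"
    by (rule sum.cong[OF refl fibre])
  also have "\<dots> = (\<Sum>v\<in>D. f (r v) * \<Phi> v)"
    using assms by (intro sum.group) auto
  finally show ?thesis
    by (simp add: mean_def)
qed

lemma sigma_sets_vimage_restrict:
  fixes val :: "'j \<Rightarrow> 'a \<Rightarrow> nat"
  assumes "A \<in> sigma_sets \<Omega> {val j -` B \<inter> \<Omega> | j B. j \<in> I}"
  shows "\<exists>C. A = {\<omega> \<in> \<Omega>. restrict (\<lambda>j. val j \<omega>) I \<in> C}"
  using assms
proof induction
  case (Basic a)
  then obtain j B where "a = val j -` B \<inter> \<Omega>" "j \<in> I"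
    by blast
  then have "a = {\<omega> \<in> \<Omega>. restrict (\<lambda>j. val j \<omega>) I \<in> {h. h j \<in> B}}"
    by auto
  then show ?case ..
next
  case Empty
  have "{} = {\<omega> \<in> \<Omega>. restrict (\<lambda>j. val j \<omega>) I \<in> {}}"
    by simp
  then show ?case ..
next
  case (Compl a)
  then obtain C where "a = {\<omega> \<in> \<Omega>. restrict (\<lambda>j. val j \<omega>) I \<in> C}"
    by blast
  then have "\<Omega> - a = {\<omega> \<in> \<Omega>. restrict (\<lambda>j. val j \<omega>) I \<in> - C}"
    by auto
  then show ?case ..
next
  case (Union a)
  then have "\<forall>i. \<exists>C. a i = {\<omega> \<in> \<Omega>. restrict (\<lambda>j. val j \<omega>) I \<in> C}"
    by blast
  then obtain C where "\<forall>i. a i = {\<omega> \<in> \<Omega>. restrict (\<lambda>j. val j \<omega>) I \<in> C i}"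
    by (rule exE[OF choice])
  then have "(\<Union>i. a i) = {\<omega> \<in> \<Omega>. restrict (\<lambda>j. val j \<omega>) I \<in> (\<Union>i. C i)}"
    by auto
  then show ?case ..
qed

locale uniform_draws = prob_space M for M :: "'a measure" +
  fixes val :: "'j \<Rightarrow> 'a \<Rightarrow> nat" and m :: nat
  assumes measurable_val: "\<And>j. val j \<in> measurable M (count_space UNIV)"
    and distr_val: "\<And>j. distr M (count_space UNIV) (val j) = measure_pmf (pmf_of_set {1..m})"
    and indep_val: "indep_vars (\<lambda>_. count_space UNIV) val UNIV"
    and m_pos: "m \<ge> 1"
begin

lemma sets_Collect_val_eq: "{\<omega> \<in> space M. val j \<omega> = a} \<in> sets M"
  using measurable_sets[OF measurable_val, of "{a}" j]
  by (simp add: vimage_def Int_def conj_commute)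

lemma prob_val_eq: "a \<in> {1..m} \<Longrightarrow> prob (val j -` {a} \<inter> space M) = 1 / real m"
  using m_pos
  by (simp add: measure_distr[OF measurable_val, symmetric] distr_val measure_pmf_single)

lemma AE_val_atLeastAtMost: "AE \<omega> in M. val j \<omega> \<in> {1..m}"
proof -
  have "AE a in measure_pmf (pmf_of_set {1..m}). a \<in> {1..m}"
    using m_pos by (simp add: AE_measure_pmf_iff)
  then have "AE a in distr M (count_space UNIV) (val j). a \<in> {1..m}"
    by (simp only: distr_val)
  then show ?thesis
    by (simp add: AE_distr_iff[OF measurable_val])
qed

lemma prob_restrict_eq:
  assumes "finite J" "J \<noteq> {}" "v \<in> PiE J (\<lambda>_. {1..m})"
  shows "prob {\<omega> \<in> space M. restrict (\<lambda>j. val j \<omega>) J = v} = 1 / real (card (PiE J (\<lambda>_. {1..m})))"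
proof -
  have "{\<omega> \<in> space M. restrict (\<lambda>j. val j \<omega>) J = v} = (\<Inter>j\<in>J. val j -` {v j} \<inter> space M)"
    using assms by (auto simp: PiE_def extensional_def restrict_def fun_eq_iff)
  then have "prob {\<omega> \<in> space M. restrict (\<lambda>j. val j \<omega>) J = v}
      = (\<Prod>j\<in>J. prob (val j -` {v j} \<inter> space M))"
    using indep_varsD[OF indep_val, of J "\<lambda>j. {v j}"] assms(1,2) by simp
  also have "\<dots> = (1 / real m) ^ card J"
    using assms(3) by (simp add: prob_val_eq PiE_def Pi_def)
  finally show ?thesis
    using assms(1) by (simp add: card_PiE power_one_over)
qed

lemma AE_restrict_comp_eq_sum_indicator:
  fixes G :: "('j \<Rightarrow> nat) \<Rightarrow> real"
  assumes "finite J"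
  shows "AE \<omega> in M. G (restrict (\<lambda>j. val j \<omega>) J)
           = (\<Sum>v\<in>PiE J (\<lambda>_. {1..m}). G v * indicator {\<omega> \<in> space M. restrict (\<lambda>j. val j \<omega>) J = v} \<omega>)"
proof -
  have "AE \<omega> in M. \<forall>j\<in>J. val j \<omega> \<in> {1..m}"
    using assms AE_val_atLeastAtMost by (intro eventually_ball_finite) auto
  then show ?thesis
    using AE_space
  proof eventually_elim
    case (elim \<omega>)
    then have "(\<Sum>v\<in>PiE J (\<lambda>_. {1..m}).
          G v * indicator {\<omega> \<in> space M. restrict (\<lambda>j. val j \<omega>) J = v} \<omega>)
        = (\<Sum>v\<in>PiE J (\<lambda>_. {1..m}). if restrict (\<lambda>j. val j \<omega>) J = v then G v else 0)"
      by (intro sum.cong) (auto simp: indicator_def)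
    also have "\<dots> = G (restrict (\<lambda>j. val j \<omega>) J)"
      using elim assms by (simp add: finite_PiE)
    finally show ?case ..
  qed
qed

lemma
  fixes G :: "('j \<Rightarrow> nat) \<Rightarrow> real"
  assumes J: "finite J" "J \<noteq> {}"
  shows integrable_restrict_comp: "integrable M (\<lambda>\<omega>. G (restrict (\<lambda>j. val j \<omega>) J))"
    and integral_restrict_comp: "(\<integral>\<omega>. G (restrict (\<lambda>j. val j \<omega>) J) \<partial>M)
           = (\<Sum>v\<in>PiE J (\<lambda>_. {1..m}). G v) / real (card (PiE J (\<lambda>_. {1..m})))"
proof -
  define D where "D = PiE J (\<lambda>_. {1..m})"
  define E where "E v = {\<omega> \<in> space M. restrict (\<lambda>j. val j \<omega>) J = v}" for v
  define S where "S \<omega> = (\<Sum>v\<in>D. G v * indicator (E v) \<omega>)" for \<omega>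
  have sets_E: "E v \<in> sets M" if "v \<in> D" for v
    using that J unfolding E_def D_def
    by (intro sets_Collect_restrict_eq sets_Collect_val_eq) (auto simp: PiE_def)
  have AE_S: "AE \<omega> in M. G (restrict (\<lambda>j. val j \<omega>) J) = S \<omega>"
    using AE_restrict_comp_eq_sum_indicator[OF J(1)] by (simp add: S_def D_def E_def)
  have G_meas: "(\<lambda>\<omega>. G (restrict (\<lambda>j. val j \<omega>) J)) \<in> borel_measurable M"
    using J(1) sets_Collect_val_eq by (rule borel_measurable_restrict_comp)
  have S_meas: "S \<in> borel_measurable M"
    unfolding S_def using sets_E
    by (intro borel_measurable_sum borel_measurable_times borel_measurable_indicator) auto
  have "integrable M S"
    unfolding S_def using sets_E
    by (intro Bochner_Integration.integrable_sum integrable_mult_right integrable_real_indicator)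
      (auto simp: less_top[symmetric])
  then show "integrable M (\<lambda>\<omega>. G (restrict (\<lambda>j. val j \<omega>) J))"
    using integrable_cong_AE[OF G_meas S_meas AE_S] by simp
  have "(\<integral>\<omega>. G (restrict (\<lambda>j. val j \<omega>) J) \<partial>M) = (\<integral>\<omega>. S \<omega> \<partial>M)"
    by (rule integral_cong_AE[OF G_meas S_meas AE_S])
  also have "\<dots> = (\<Sum>v\<in>D. G v * prob (E v))"
    unfolding S_def using sets_E
    by (subst Bochner_Integration.integral_sum) (auto simp: less_top[symmetric])
  also have "\<dots> = (\<Sum>v\<in>D. G v) / real (card D)"
    using J by (simp add: E_def D_def prob_restrict_eq sum_divide_distrib)
  finally show "(\<integral>\<omega>. G (restrict (\<lambda>j. val j \<omega>) J) \<partial>M)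
      = (\<Sum>v\<in>PiE J (\<lambda>_. {1..m}). G v) / real (card (PiE J (\<lambda>_. {1..m})))"
    by (simp add: D_def)
qed



lemma
  shows space_sigma_draws: "space (sigma (space M) {val j -` A \<inter> space M | j A. j \<in> I}) = space M"
    and sets_sigma_draws: "sets (sigma (space M) {val j -` A \<inter> space M | j A. j \<in> I})
           = sigma_sets (space M) {val j -` A \<inter> space M | j A. j \<in> I}"
proof -
  have "{val j -` A \<inter> space M | j A. j \<in> I} \<subseteq> Pow (space M)"
    by auto
  then show "space (sigma (space M) {val j -` A \<inter> space M | j A. j \<in> I}) = space M"
    and "sets (sigma (space M) {val j -` A \<inter> space M | j A. j \<in> I})
           = sigma_sets (space M) {val j -` A \<inter> space M | j A. j \<in> I}"
    by (simp_all add: space_measure_of_conv sets_measure_of)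
qed

lemma subalgebra_sigma_draws: "subalgebra M (sigma (space M) {val j -` A \<inter> space M | j A. j \<in> I})"
  unfolding subalgebra_def space_sigma_draws sets_sigma_draws using measurable_sets[OF measurable_val]
  by (intro conjI refl sets.sigma_sets_subset) auto

lemma sets_Collect_val_eq_sigma_draws:
  assumes "j \<in> I"
  shows "{\<omega> \<in> space M. val j \<omega> = a} \<in> sets (sigma (space M) {val j -` A \<inter> space M | j A. j \<in> I})"
proof -
  have "{\<omega> \<in> space M. val j \<omega> = a} = val j -` {a} \<inter> space M"
    by auto
  then show ?thesis
    unfolding sets_sigma_draws using assms by (auto intro: sigma_sets.Basic)
qed

lemma set_integral_restrict_comp_eq_average:
  fixes \<Phi> :: "('j \<Rightarrow> nat) \<Rightarrow> real"
  assumes J: "finite J" "J \<noteq> {}" "I \<subseteq> J"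
    and A: "A = {\<omega> \<in> space M. restrict (\<lambda>j. val j \<omega>) I \<in> C}"
  shows "(\<integral>\<omega>\<in>A. \<Phi> (restrict (\<lambda>j. val j \<omega>) J) \<partial>M)
       = (\<integral>\<omega>\<in>A. (\<Sum>v\<in>completions m J I (restrict (\<lambda>j. val j \<omega>) I). \<Phi> v)
                    / real (card (completions m J I (restrict (\<lambda>j. val j \<omega>) I))) \<partial>M)"
proof -
  define D where "D = PiE J (\<lambda>_. {1..m})"
  define \<psi> where "\<psi> h = (\<Sum>v\<in>completions m J I h. \<Phi> v) / real (card (completions m J I h))" for h
  have JI: "J \<inter> I = I"
    using J(3) by auto
  have "finite D"
    using J by (simp add: D_def finite_PiE)
  have "(\<integral>\<omega>\<in>A. \<Phi> (restrict (\<lambda>j. val j \<omega>) J) \<partial>M)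
      = (\<integral>\<omega>. indicator C (restrict (restrict (\<lambda>j. val j \<omega>) J) I) * \<Phi> (restrict (\<lambda>j. val j \<omega>) J) \<partial>M)"
    unfolding set_lebesgue_integral_def A restrict_restrict JI
    by (intro Bochner_Integration.integral_cong) (auto simp: indicator_def)
  also have "\<dots> = (\<Sum>v\<in>D. indicator C (restrict v I) * \<Phi> v) / real (card D)"
    unfolding D_def by (rule integral_restrict_comp[OF J(1,2)])
  also have "\<dots> = (\<Sum>v\<in>D. indicator C (restrict v I) * \<psi> (restrict v I)) / real (card D)"
    using sum_weighted_fibre_mean[OF \<open>finite D\<close>, of "indicator C" "\<lambda>v. restrict v I" \<Phi>]
    by (simp add: \<psi>_def completions_def D_def)
  also have "\<dots> = (\<integral>\<omega>. indicator C (restrict (restrict (\<lambda>j. val j \<omega>) J) I)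
                          * \<psi> (restrict (restrict (\<lambda>j. val j \<omega>) J) I) \<partial>M)"
    unfolding D_def by (rule integral_restrict_comp[OF J(1,2), symmetric])
  also have "\<dots> = (\<integral>\<omega>\<in>A. \<psi> (restrict (\<lambda>j. val j \<omega>) I) \<partial>M)"
    unfolding set_lebesgue_integral_def A restrict_restrict JI
    by (intro Bochner_Integration.integral_cong) (auto simp: indicator_def)
  finally show ?thesis
    by (simp add: \<psi>_def)
qed

theorem real_cond_exp_restrict_comp:
  fixes \<Phi> :: "('j \<Rightarrow> nat) \<Rightarrow> real"
  assumes J: "finite J" "J \<noteq> {}" "I \<subseteq> J"
  defines "F \<equiv> sigma (space M) {val j -` A \<inter> space M | j A. j \<in> I}"
  shows "AE \<omega> in M. real_cond_exp M F (\<lambda>\<omega>. \<Phi> (restrict (\<lambda>j. val j \<omega>) J)) \<omega>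
       = (\<Sum>v\<in>completions m J I (restrict (\<lambda>j. val j \<omega>) I). \<Phi> v)
           / real (card (completions m J I (restrict (\<lambda>j. val j \<omega>) I)))"
proof -
  define \<psi> where "\<psi> h = (\<Sum>v\<in>completions m J I h. \<Phi> v) / real (card (completions m J I h))" for h
  interpret finite_measure_subalgebra M F
    unfolding F_def by unfold_locales (rule subalgebra_sigma_draws)
  have "{\<omega> \<in> space F. val j \<omega> = a} \<in> sets F" if "j \<in> I" for j a
    using that unfolding F_def space_sigma_draws by (rule sets_Collect_val_eq_sigma_draws)
  then have \<psi>_meas: "(\<lambda>\<omega>. \<psi> (restrict (\<lambda>j. val j \<omega>) I)) \<in> borel_measurable F"
    using J(1,3) finite_subset by (intro borel_measurable_restrict_comp) blast+
  have set_integrals: "(\<integral>\<omega>\<in>A. \<Phi> (restrict (\<lambda>j. val j \<omega>) J) \<partial>M)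
      = (\<integral>\<omega>\<in>A. \<psi> (restrict (\<lambda>j. val j \<omega>) I) \<partial>M)"
    if "A \<in> sets F" for A
  proof -
    have "A \<in> sigma_sets (space M) {val j -` A \<inter> space M | j A. j \<in> I}"
      using \<open>A \<in> sets F\<close> unfolding F_def sets_sigma_draws .
    then obtain C where "A = {\<omega> \<in> space M. restrict (\<lambda>j. val j \<omega>) I \<in> C}"
      using sigma_sets_vimage_restrict by blast
    then show ?thesis
      unfolding \<psi>_def by (rule set_integral_restrict_comp_eq_average[OF J])
  qed
  have "integrable M (\<lambda>\<omega>. \<psi> (restrict (restrict (\<lambda>j. val j \<omega>) J) I))"
    by (rule integrable_restrict_comp[OF J(1,2)])
  then have "AE \<omega> in M. real_cond_exp M F (\<lambda>\<omega>. \<Phi> (restrict (\<lambda>j. val j \<omega>) J)) \<omega>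
      = \<psi> (restrict (\<lambda>j. val j \<omega>) I)"
    using set_integrals integrable_restrict_comp[OF J(1,2)] \<psi>_meas J(3)
    by (intro real_cond_exp_charact) (simp_all add: Int_absorb1)
  then show ?thesis
    by (simp add: \<psi>_def)
qed

end

section \<open>The draws of GT-SAGA\<close>

text \<open>A sample path of all draws is a function on \<open>bool \<times> nat \<times> 'n\<close>: \<open>(True, t, i)\<close> carries
  \<open>\<tau>\<^sub>i\<^sup>t\<close> and \<open>(False, t, i)\<close> carries \<open>s\<^sub>i\<^sup>t\<close>, as in the independence hypothesis of the theorem.\<close>

definition draws_before :: "nat \<Rightarrow> (bool \<times> nat \<times> 'n) set" where
  "draws_before k = UNIV \<times> {..<k} \<times> UNIV"

definition draws_upto :: "nat \<Rightarrow> (bool \<times> nat \<times> 'n) set" where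
  "draws_upto k = UNIV \<times> {..k} \<times> UNIV"

definition tau_draws :: "(bool \<times> nat \<times> 'n \<Rightarrow> nat) \<Rightarrow> nat \<Rightarrow> 'n \<Rightarrow> nat" where
  "tau_draws v t i = v (True, t, i)"

definition s_draws :: "(bool \<times> nat \<times> 'n \<Rightarrow> nat) \<Rightarrow> nat \<Rightarrow> 'n \<Rightarrow> nat" where
  "s_draws v t i = v (False, t, i)"

definition extend_draws ::
    "nat \<Rightarrow> (bool \<times> nat \<times> 'n \<Rightarrow> nat) \<Rightarrow> ('n \<Rightarrow> nat) \<Rightarrow> ('n \<Rightarrow> nat) \<Rightarrow> bool \<times> nat \<times> 'n \<Rightarrow> nat"
  where
  "extend_draws k h \<tau> \<sigma>
     = merge (draws_before k) (UNIV \<times> {k} \<times> UNIV) (h, \<lambda>(b, _, i). if b then \<tau> i else \<sigma> i)"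

lemma draws_before_iff [simp]: "(b, t, i) \<in> draws_before k \<longleftrightarrow> t < k"
  by (simp add: draws_before_def)

lemma draws_upto_iff [simp]: "(b, t, i) \<in> draws_upto k \<longleftrightarrow> t \<le> k"
  by (simp add: draws_upto_def)

lemma extend_draws_apply:
  "extend_draws k h \<tau> \<sigma> (b, t, i)
     = (if t < k then h (b, t, i) else if t = k then (if b then \<tau> i else \<sigma> i) else undefined)"
  by (simp add: extend_draws_def merge_def)

lemma bij_betw_extend_draws:
  assumes "h \<in> PiE (draws_before k) (\<lambda>_. {1..m})"
  shows "bij_betw (\<lambda>(\<tau>, \<sigma>). extend_draws k h \<tau> \<sigma>) (node_draws m \<times> node_draws m)
           (completions m (draws_upto k) (draws_before k :: (bool \<times> nat \<times> 'n::finite) set) h)"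
proof -
  let ?C = "completions m (draws_upto k) (draws_before k :: (bool \<times> nat \<times> 'n) set) h"
  define extend where "extend = (\<lambda>(\<tau>, \<sigma>). extend_draws k h \<tau> \<sigma>)"
  define round_draws where "round_draws v = ((\<lambda>i. v (True, k, i)), (\<lambda>i. v (False, k, i)))"
    for v :: "bool \<times> nat \<times> 'n \<Rightarrow> nat"
  have "extend (round_draws v) = v" if "v \<in> ?C" for v
  proof -
    from that have "v \<in> extensional (draws_upto k)" and h: "restrict v (draws_before k) = h"
      by (auto simp: completions_def PiE_def)
    moreover have "h (b, t, i) = v (b, t, i)" if "t < k" for b t i
      using that by (simp add: h[symmetric])
    ultimately show ?thesis
      by (auto simp: extend_def round_draws_def fun_eq_iff extend_draws_apply extensional_def)
  qed
  moreover have "round_draws (extend p) = p" for p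
    by (auto simp: extend_def round_draws_def extend_draws_apply fun_eq_iff split: prod.split)
  moreover have "extend ` (node_draws m \<times> node_draws m) \<subseteq> ?C"
    using assms
    by (auto simp: extend_def completions_def PiE_iff extend_draws_apply fun_eq_iff extensional_def)
  moreover have "round_draws ` ?C \<subseteq> node_draws m \<times> node_draws m"
    by (auto simp: round_draws_def completions_def PiE_iff)
  ultimately show ?thesis
    unfolding extend_def[symmetric] by (intro bij_betw_byWitness[where f' = round_draws]) auto
qed

lemma gt_saga_completion_average_le:
  fixes W :: "real^'n::finite^'n" and grad :: "'n \<Rightarrow> nat \<Rightarrow> 'v \<Rightarrow> 'v::euclidean_space"
    and m :: nat and \<alpha> :: real and x0 :: 'v and h :: "bool \<times> nat \<times> 'n \<Rightarrow> nat" and k :: nat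
  assumes m: "m \<ge> 1"
    and smooth: "\<And>i j u v. j \<in> {1..m} \<Longrightarrow> norm (grad i j u - grad i j v) \<le> L * norm (u - v)"
    and step: "\<alpha>\<^sup>2 * L\<^sup>2 \<le> real CARD('n) / (8 * real m)"
    and col: "\<And>r. (\<Sum>i\<in>UNIV. W $ i $ r) = 1"
    and h: "h \<in> PiE (draws_before k) (\<lambda>_. {1..m})"
  defines "x \<equiv> gt_x W grad m \<alpha> x0 (tau_draws h) (s_draws h) k"
    and "z \<equiv> gt_z W grad m \<alpha> x0 (tau_draws h) (s_draws h) k"
    and "C \<equiv> completions m (draws_upto k) (draws_before k) h"
  shows "(\<Sum>v\<in>C. tk m (gt_x W grad m \<alpha> x0 (tau_draws v) (s_draws v) (Suc k))
                     (gt_z W grad m \<alpha> x0 (tau_draws v) (s_draws v) (Suc k))) / real (card C)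
     \<le> (1 - 1 / (4 * real m)) * tk m x z + 4 * real m * \<alpha>\<^sup>2 * (norm (avg_grad grad m x))\<^sup>2
        + 9 / (4 * real m * real CARD('n)) * consensus_err x"
proof -
  let ?T = "node_draws m :: ('n \<Rightarrow> nat) set"
  define next_spread where
    "next_spread v = tk m (gt_x W grad m \<alpha> x0 (tau_draws v) (s_draws v) (Suc k))
                          (gt_z W grad m \<alpha> x0 (tau_draws v) (s_draws v) (Suc k))" for v
  have bij: "bij_betw (\<lambda>(\<tau>, \<sigma>). extend_draws k h \<tau> \<sigma>) (?T \<times> ?T) C"
    unfolding C_def by (rule bij_betw_extend_draws[OF h])
  have extended: "next_spread (extend_draws k h \<tau> \<sigma>)
      = table_spread m (avg x - \<alpha> *\<^sub>R avg (gt_g grad m x z \<tau>)) (saga_refresh x z \<sigma>)" for \<tau> \<sigma>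
  proof -
    let ?v = "extend_draws k h \<tau> \<sigma>"
    have "gt_saga W grad m \<alpha> x0 (tau_draws ?v) (s_draws ?v) k
        = gt_saga W grad m \<alpha> x0 (tau_draws h) (s_draws h) k"
      by (rule gt_saga_cong_draws)
        (simp add: tau_draws_def s_draws_def extend_draws_apply fun_eq_iff)
    then have x: "gt_x W grad m \<alpha> x0 (tau_draws ?v) (s_draws ?v) k = x"
      and z: "gt_z W grad m \<alpha> x0 (tau_draws ?v) (s_draws ?v) k = z"
      by (simp_all add: x_def z_def gt_x_def gt_z_def)
    have "tau_draws ?v k = \<tau>" "s_draws ?v k = \<sigma>"
      by (simp_all add: tau_draws_def s_draws_def extend_draws_apply fun_eq_iff)
    then show ?thesis
      using tk_gt_saga_Suc[OF col, of m grad \<alpha> x0 "tau_draws ?v" "s_draws ?v" k]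
      unfolding next_spread_def x z by simp
  qed
  have "(\<Sum>v\<in>C. next_spread v)
      = (\<Sum>\<tau>\<in>?T. \<Sum>\<sigma>\<in>?T. table_spread m (avg x - \<alpha> *\<^sub>R avg (gt_g grad m x z \<tau>)) (saga_refresh x z \<sigma>))"
    unfolding sum.reindex_bij_betw[OF bij, symmetric] sum.cartesian_product
    by (auto intro!: sum.cong simp: extended)
  moreover have "real (card C) = (real (card ?T))\<^sup>2"
    using bij_betw_same_card[OF bij]
    by (simp add: card_cartesian_product power2_eq_square flip: of_nat_mult)
  ultimately show ?thesis
    using expected_table_spread_step_le[OF m smooth step] by (simp add: next_spread_def)
qed

lemma step_size_sq_le:
  assumes "L > 0" "m \<ge> 1" "0 < \<alpha>" "\<alpha> \<le> sqrt N / (sqrt (8 * real m) * L)"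
  shows "\<alpha>\<^sup>2 * L\<^sup>2 \<le> N / (8 * real m)"
proof -
  have le: "\<alpha> * (sqrt (8 * real m) * L) \<le> sqrt N"
    using assms by (simp add: le_divide_eq)
  have pos: "0 < \<alpha> * (sqrt (8 * real m) * L)"
    using assms by simp
  have "0 < N"
    using le pos real_sqrt_gt_0_iff by fastforce
  have "(\<alpha> * (sqrt (8 * real m) * L))\<^sup>2 \<le> (sqrt N)\<^sup>2"
    using le pos by (intro power_mono) auto
  then show ?thesis
    using assms \<open>0 < N\<close> by (simp add: power_mult_distrib le_divide_eq algebra_simps)
qed

lemma gt_saga_restrict_draws:
  assumes "\<And>b t i. t < k \<Longrightarrow> (b, t, i) \<in> J"
  shows "gt_saga W grad m \<alpha> x0 (tau_draws (restrict v J)) (s_draws (restrict v J)) k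
       = gt_saga W grad m \<alpha> x0 (tau_draws v) (s_draws v) k"
  using assms by (intro gt_saga_cong_draws) (simp add: tau_draws_def s_draws_def fun_eq_iff)

lemma filt_eq_sigma_draws_before:
  "filt M tau s k
     = sigma (space M)
         {(\<lambda>(b, t, i). if b then tau t i else s t i) j -` A \<inter> space M | j A. j \<in> draws_before k}"
proof -
  have "{(\<lambda>(b, t, i). if b then tau t i else s t i) j -` A \<inter> space M | j A. j \<in> draws_before k}
      = (\<Union>b. {(if b then tau t i else s t i) -` A \<inter> space M | t i A. t < k})"
    by (auto simp: draws_before_def)
  also have "\<dots> = {tau t i -` A \<inter> space M | t i A. t < k} \<union> {s t i -` A \<inter> space M | t i A. t < k}"
    by (auto simp: UNIV_bool)
  finally show ?thesis
    by (simp add: filt_def)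
qed

lemma gt_saga_real_cond_exp_tk_le:
  fixes val :: "bool \<times> nat \<times> 'n::finite \<Rightarrow> 'a \<Rightarrow> nat"
    and grad :: "'n \<Rightarrow> nat \<Rightarrow> 'v \<Rightarrow> 'v::euclidean_space"
    and W :: "real^'n^'n" and m :: nat and \<alpha> :: real and x0 :: 'v and k :: nat
  assumes draws: "uniform_draws M val m"
    and smooth: "\<And>i j u v. j \<in> {1..m} \<Longrightarrow> norm (grad i j u - grad i j v) \<le> L * norm (u - v)"
    and step: "\<alpha>\<^sup>2 * L\<^sup>2 \<le> real CARD('n) / (8 * real m)"
    and col: "\<And>r. (\<Sum>i\<in>UNIV. W $ i $ r) = 1"
  shows "AE \<omega> in M.
     real_cond_exp M (sigma (space M) {val j -` A \<inter> space M | j A. j \<in> draws_before k})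
       (\<lambda>\<omega>. tk m (gt_x W grad m \<alpha> x0 (tau_draws (\<lambda>j. val j \<omega>)) (s_draws (\<lambda>j. val j \<omega>)) (Suc k))
                  (gt_z W grad m \<alpha> x0 (tau_draws (\<lambda>j. val j \<omega>)) (s_draws (\<lambda>j. val j \<omega>)) (Suc k))) \<omega>
     \<le> (1 - 1 / (4 * real m)) *
          tk m (gt_x W grad m \<alpha> x0 (tau_draws (\<lambda>j. val j \<omega>)) (s_draws (\<lambda>j. val j \<omega>)) k)
               (gt_z W grad m \<alpha> x0 (tau_draws (\<lambda>j. val j \<omega>)) (s_draws (\<lambda>j. val j \<omega>)) k)
        + 4 * real m * \<alpha>\<^sup>2 *
            (norm (avg_grad grad m (gt_x W grad m \<alpha> x0 (tau_draws (\<lambda>j. val j \<omega>)) (s_draws (\<lambda>j. val j \<omega>)) k)))\<^sup>2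
        + 9 / (4 * real m * real CARD('n)) *
            consensus_err (gt_x W grad m \<alpha> x0 (tau_draws (\<lambda>j. val j \<omega>)) (s_draws (\<lambda>j. val j \<omega>)) k)"
proof -
  interpret uniform_draws M val m
    by (rule draws)
  define \<Phi> where "\<Phi> v = tk m (gt_x W grad m \<alpha> x0 (tau_draws v) (s_draws v) (Suc k))
                                (gt_z W grad m \<alpha> x0 (tau_draws v) (s_draws v) (Suc k))" for v
  define h where "h \<omega> = restrict (\<lambda>j. val j \<omega>) (draws_before k)" for \<omega>
  have X_eq: "(\<lambda>\<omega>. tk m (gt_x W grad m \<alpha> x0 (tau_draws (\<lambda>j. val j \<omega>)) (s_draws (\<lambda>j. val j \<omega>)) (Suc k))
                   (gt_z W grad m \<alpha> x0 (tau_draws (\<lambda>j. val j \<omega>)) (s_draws (\<lambda>j. val j \<omega>)) (Suc k)))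
      = (\<lambda>\<omega>. \<Phi> (restrict (\<lambda>j. val j \<omega>) (draws_upto k)))"
    by (simp add: \<Phi>_def gt_x_def gt_z_def gt_saga_restrict_draws del: gt_saga.simps)
  have cond_exp: "AE \<omega> in M.
      real_cond_exp M (sigma (space M) {val j -` A \<inter> space M | j A. j \<in> draws_before k})
       (\<lambda>\<omega>. tk m (gt_x W grad m \<alpha> x0 (tau_draws (\<lambda>j. val j \<omega>)) (s_draws (\<lambda>j. val j \<omega>)) (Suc k))
                  (gt_z W grad m \<alpha> x0 (tau_draws (\<lambda>j. val j \<omega>)) (s_draws (\<lambda>j. val j \<omega>)) (Suc k))) \<omega>
      = (\<Sum>v\<in>completions m (draws_upto k) (draws_before k) (h \<omega>). \<Phi> v)
          / real (card (completions m (draws_upto k) (draws_before k) (h \<omega>)))"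
    unfolding X_eq h_def
    by (rule real_cond_exp_restrict_comp) (auto simp: draws_upto_def draws_before_def)
  have "AE \<omega> in M. \<forall>j\<in>draws_before k. val j \<omega> \<in> {1..m}"
    by (intro eventually_ball_finite AE_val_atLeastAtMost ballI) (simp add: draws_before_def)
  then have "AE \<omega> in M. h \<omega> \<in> PiE (draws_before k) (\<lambda>_. {1..m})"
    by eventually_elim (simp add: h_def)
  with cond_exp show ?thesis
  proof eventually_elim
    case (elim \<omega>)
    have state: "gt_saga W grad m \<alpha> x0 (tau_draws (h \<omega>)) (s_draws (h \<omega>)) k
        = gt_saga W grad m \<alpha> x0 (tau_draws (\<lambda>j. val j \<omega>)) (s_draws (\<lambda>j. val j \<omega>)) k"
      by (simp add: h_def gt_saga_restrict_draws del: gt_saga.simps)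
    show ?case
      using elim(1) m_pos
        gt_saga_completion_average_le[where grad = grad and ?x0.0 = x0, OF _ smooth step col elim(2)]
      unfolding \<Phi>_def gt_x_def gt_z_def state by linarith
  qed
qed

text \<open>Only the Lipschitz bound on the gradients enters; \<open>deriv\<close> and \<open>bdd\<close>, which relate \<open>grad\<close>
  to \<open>f\<close> and bound \<open>F\<close> from below, are part of the setting but not needed for this step.\<close>

theorem corollary1:
  fixes f :: "'n::finite \<Rightarrow> nat \<Rightarrow> 'v::euclidean_space \<Rightarrow> real" and grad :: "'n \<Rightarrow> nat \<Rightarrow> 'v \<Rightarrow> 'v"
    and L \<alpha> :: real and m :: nat and W :: "real^'n^'n" and x0 :: 'v
    and M :: "'a measure" and tau s :: "nat \<Rightarrow> 'n \<Rightarrow> 'a \<Rightarrow> nat" and k :: nat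
  assumes m: "m \<ge> 1"
    and L: "L > 0"
    and deriv: "\<And>i j x. j \<in> {1..m} \<Longrightarrow> (f i j has_derivative (\<lambda>h. grad i j x \<bullet> h)) (at x)"
    and smooth: "\<And>i j x y. j \<in> {1..m} \<Longrightarrow> norm (grad i j x - grad i j y) \<le> L * norm (x - y)"
    and bdd: "bdd_below (range (\<lambda>x. (1 / real CARD('n)) * (\<Sum>i\<in>UNIV. (1 / real m) * (\<Sum>j=1..m. f i j x))))"
    and W: "nonneg_primitive_doubly_stochastic W"
    and P: "prob_space M"
    and tau_rv: "\<And>t i. tau t i \<in> measurable M (count_space UNIV)"
    and s_rv: "\<And>t i. s t i \<in> measurable M (count_space UNIV)"
    and tau_unif: "\<And>t i. distr M (count_space UNIV) (tau t i) = measure_pmf (pmf_of_set {1..m})"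
    and s_unif: "\<And>t i. distr M (count_space UNIV) (s t i) = measure_pmf (pmf_of_set {1..m})"
    and indep: "prob_space.indep_vars M (\<lambda>_. count_space UNIV)
                  (\<lambda>(b, t, i). if b then tau t i else s t i) (UNIV :: (bool \<times> nat \<times> 'n) set)"
    and alpha_pos: "0 < \<alpha>"
    and alpha_le: "\<alpha> \<le> sqrt (real CARD('n)) / (sqrt (8 * real m) * L)"
  shows "AE \<omega> in M.
     real_cond_exp M (filt M tau s k)
       (\<lambda>\<omega>. tk m (gt_x W grad m \<alpha> x0 (\<lambda>t i. tau t i \<omega>) (\<lambda>t i. s t i \<omega>) (Suc k))
                  (gt_z W grad m \<alpha> x0 (\<lambda>t i. tau t i \<omega>) (\<lambda>t i. s t i \<omega>) (Suc k))) \<omega>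
     \<le> (1 - 1 / (4 * real m)) *
          tk m (gt_x W grad m \<alpha> x0 (\<lambda>t i. tau t i \<omega>) (\<lambda>t i. s t i \<omega>) k)
               (gt_z W grad m \<alpha> x0 (\<lambda>t i. tau t i \<omega>) (\<lambda>t i. s t i \<omega>) k)
        + 4 * real m * \<alpha>\<^sup>2 *
            (norm (avg_grad grad m (gt_x W grad m \<alpha> x0 (\<lambda>t i. tau t i \<omega>) (\<lambda>t i. s t i \<omega>) k)))\<^sup>2
        + 9 / (4 * real m * real CARD('n)) *
            consensus_err (gt_x W grad m \<alpha> x0 (\<lambda>t i. tau t i \<omega>) (\<lambda>t i. s t i \<omega>) k)"
proof -
  define val :: "bool \<times> nat \<times> 'n \<Rightarrow> 'a \<Rightarrow> nat"
    where "val = (\<lambda>(b, t, i). if b then tau t i else s t i)"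
  have draws: "uniform_draws M val m"
    unfolding uniform_draws_def uniform_draws_axioms_def
    using P m tau_rv s_rv tau_unif s_unif indep by (auto simp: val_def split: prod.split)
  have col: "\<And>r. (\<Sum>i\<in>UNIV. W $ i $ r) = 1"
    using W by (simp add: nonneg_primitive_doubly_stochastic_def)
  have "tau_draws (\<lambda>j. val j \<omega>) = (\<lambda>t i. tau t i \<omega>)" "s_draws (\<lambda>j. val j \<omega>) = (\<lambda>t i. s t i \<omega>)" for \<omega>
    by (simp_all add: tau_draws_def s_draws_def val_def fun_eq_iff)
  moreover have "filt M tau s k = sigma (space M) {val j -` A \<inter> space M | j A. j \<in> draws_before k}"
    unfolding val_def by (rule filt_eq_sigma_draws_before)
  ultimately show ?thesis
    using gt_saga_real_cond_exp_tk_le[where grad = grad and ?x0.0 = x0 and k = k,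
        OF draws smooth step_size_sq_le[OF L m alpha_pos alpha_le] col]
    by simp
qed

end
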